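(* Let $X$ be a complex Banach space, $x\in X$ a unit vector, and $x^*\in X^*$ a functional that strongly exposes $x$. If $T=\{e^{tA}:t\ge 0\}$ is a $(C_0)$ contraction semigroup with generator $A$ such that \[\lim_{t\to\infty}|\langle T(t)x,x^*\rangle|=1,\] then $x$ is in the domain of $A$ and $Ax=i\lambda x$ for some real number $\lambda$.
   Context: Let $B$ denote the closed unit ball of $X$. For a unit vector $x^*\in X^*$ and $0<\alpha<1$, the slice is $S(B,x^*,\alpha)=\{y:\|y\|\le 1,\ \Re\langle y,x^*\rangle\ge 1-\alpha\}$. A functional $x^*\in X^*$ strongly exposes the unit vector $x$ if $\|x^*\|=1$, $\langle x,x^*\rangle = 1$, and $\lim_{\alpha\to0^+}\operatorname{diam} S(B,x^*,\alpha)=0$, where $\operatorname{diam} S=\sup\{\|y-z\|:y,z\in S\}$. *)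

theory Defs
  imports "HOL-Analysis.Analysis"
begin

text \<open>HOL has no type class of complex vector spaces.  A complex normed space is
encoded as a real normed space together with a real-linear map J (multiplication
by the imaginary unit) with J (J x) = - x, such that the induced complex scalar
multiplication is absolutely homogeneous for the norm.\<close>

definition cscale :: "('a::real_normed_vector \<Rightarrow> 'a) \<Rightarrow> complex \<Rightarrow> 'a \<Rightarrow> 'a" where
  "cscale J c x = Re c *\<^sub>R x + Im c *\<^sub>R J x"

definition complex_structure :: "('a::real_normed_vector \<Rightarrow> 'a) \<Rightarrow> bool" where
  "complex_structure J \<longleftrightarrow> linear J \<and> (\<forall>x. J (J x) = - x) \<and>
     (\<forall>c x. norm (cscale J c x) = cmod c * norm x)"

definition dual_functional :: "('a::real_normed_vector \<Rightarrow> 'a) \<Rightarrow> ('a \<Rightarrow> complex) \<Rightarrow> bool" where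
  "dual_functional J f \<longleftrightarrow> bounded_linear f \<and> (\<forall>x. f (J x) = \<i> * f x)"

definition bounded_cop :: "('a::real_normed_vector \<Rightarrow> 'a) \<Rightarrow> ('a \<Rightarrow> 'a) \<Rightarrow> bool" where
  "bounded_cop J L \<longleftrightarrow> bounded_linear L \<and> (\<forall>x. L (J x) = J (L x))"

definition slice :: "('a::real_normed_vector \<Rightarrow> complex) \<Rightarrow> real \<Rightarrow> 'a set" where
  "slice f \<alpha> = {y. norm y \<le> 1 \<and> Re (f y) \<ge> 1 - \<alpha>}"

definition strongly_exposes ::
  "('a::real_normed_vector \<Rightarrow> 'a) \<Rightarrow> ('a \<Rightarrow> complex) \<Rightarrow> 'a \<Rightarrow> bool" where
  "strongly_exposes J f x \<longleftrightarrow> dual_functional J f \<and> onorm f = 1 \<and> f x = 1 \<and>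
     ((\<lambda>\<alpha>. diameter (slice f \<alpha>)) \<longlongrightarrow> 0) (at_right 0)"

definition C0_contraction_semigroup ::
  "('a::real_normed_vector \<Rightarrow> 'a) \<Rightarrow> (real \<Rightarrow> 'a \<Rightarrow> 'a) \<Rightarrow> bool" where
  "C0_contraction_semigroup J T \<longleftrightarrow>
     (\<forall>t\<ge>0. bounded_cop J (T t) \<and> onorm (T t) \<le> 1) \<and>
     (\<forall>x. T 0 x = x) \<and>
     (\<forall>s t x. s \<ge> 0 \<longrightarrow> t \<ge> 0 \<longrightarrow> T (s + t) x = T s (T t x)) \<and>
     (\<forall>x. ((\<lambda>t. T t x) \<longlongrightarrow> x) (at_right 0))"

text \<open>Graph of the generator A: x \<in> D(A) with A x = y.\<close>
definition generator_at :: "(real \<Rightarrow> 'a::real_normed_vector \<Rightarrow> 'a) \<Rightarrow> 'a \<Rightarrow> 'a \<Rightarrow> bool" where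
  "generator_at T x y \<longleftrightarrow> ((\<lambda>t. (1 / t) *\<^sub>R (T t x - x)) \<longlongrightarrow> y) (at_right 0)"

end

theory Submission
  imports Defs
begin

text \<open>Strong exposure forces every vector y of the unit ball with \<open>|f y|\<close> close to 1 to be
close to a unimodular multiple of x.  Since \<open>|f (T t x)| \<rightarrow> 1\<close>, for large t both \<open>T t x\<close> and
\<open>T (s + t) x = T s (T t x)\<close> are nearly unimodular multiples of x; as \<open>T s\<close> is a complex-linear
contraction, \<open>T s x\<close> lies in the closure of the circle \<open>{c x | |c| = 1}\<close>, hence on it:
\<open>T s x = \<phi> s x\<close> with \<open>\<phi> s = f (T s x)\<close>.  The semigroup law makes \<open>\<phi>\<close> a continuous unimodular
character of \<open>[0, \<infinity>)\<close>.  Its integral G satisfies \<open>G (t + d) - G t = \<phi> t G d\<close>, so choosing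
\<open>G d \<noteq> 0\<close> exhibits \<open>\<phi>\<close> as a differentiable function; differentiating \<open>|\<phi>|\<^sup>2 = 1\<close> at 0 shows
that its derivative z is purely imaginary, and \<open>A x = z x\<close>.\<close>

context
  fixes J :: "'a::real_normed_vector \<Rightarrow> 'a"
  assumes cs: "complex_structure J"
begin

lemma linear_complex_structure: "linear J"
  using cs by (simp add: complex_structure_def)

lemma norm_cscale: "norm (cscale J c x) = cmod c * norm x"
  using cs by (simp add: complex_structure_def)

lemma cscale_cscale: "cscale J a (cscale J b y) = cscale J (a * b) y"
proof -
  interpret linear J by (rule linear_complex_structure)
  show ?thesis
    using cs by (simp add: complex_structure_def cscale_def add scale algebra_simps)
qed

lemma cscale_diff: "cscale J c (y - z) = cscale J c y - cscale J c z"
proof -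
  interpret linear J by (rule linear_complex_structure)
  show ?thesis by (simp add: cscale_def diff algebra_simps)
qed

end

lemma bounded_linear_cscale_left: "bounded_linear (\<lambda>c. cscale J c x)"
  unfolding cscale_def by (intro bounded_linear_intros bounded_linear_Re bounded_linear_Im)

lemma bounded_cop_cscale:
  assumes "bounded_cop J L"
  shows "L (cscale J c y) = cscale J c (L y)"
proof -
  interpret bounded_linear L using assms by (simp add: bounded_cop_def)
  show ?thesis using assms by (simp add: cscale_def add scale bounded_cop_def)
qed

lemma dual_functional_cscale:
  assumes "dual_functional J f"
  shows "f (cscale J c y) = c * f y"
proof -
  interpret bounded_linear f using assms by (simp add: dual_functional_def)
  have "f (cscale J c y) = (of_real (Re c) + \<i> * of_real (Im c)) * f y"
    using assms by (simp add: cscale_def add scale dual_functional_def scaleR_conv_of_real algebra_simps)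
  then show ?thesis by (simp add: complex_eq[symmetric])
qed

lemma has_vector_derivative_iff_tendsto_quotient:
  "(f has_vector_derivative D) (at x within S) \<longleftrightarrow>
    ((\<lambda>y. (1 / (y - x)) *\<^sub>R (f y - f x)) \<longlongrightarrow> D) (at x within S)"
proof -
  have "norm (f y - f x - (y - x) *\<^sub>R D) / norm (y - x) =
      norm ((1 / (y - x)) *\<^sub>R (f y - f x) - D)" if "y \<noteq> x" for y
  proof -
    have "(1 / (y - x)) *\<^sub>R (f y - f x) - D = (1 / (y - x)) *\<^sub>R (f y - f x - (y - x) *\<^sub>R D)"
      using that by (simp add: scaleR_diff_right)
    then show ?thesis by (simp add: divide_inverse_commute)
  qed
  then have "((\<lambda>y. norm (f y - f x - (y - x) *\<^sub>R D) / norm (y - x)) \<longlongrightarrow> 0) (at x within S) \<longleftrightarrow>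
      ((\<lambda>y. norm ((1 / (y - x)) *\<^sub>R (f y - f x) - D)) \<longlongrightarrow> 0) (at x within S)"
    by (intro tendsto_cong) (auto simp: eventually_at_filter)
  then show ?thesis
    by (simp add: has_vector_derivative_def has_derivative_iff_norm bounded_linear_scaleR_left
        tendsto_norm_zero_iff LIM_zero_iff)
qed

lemma generator_at_iff_has_vector_derivative:
  assumes "T 0 x = x"
  shows "generator_at T x y \<longleftrightarrow> ((\<lambda>t. T t x) has_vector_derivative y) (at_right 0)"
  using assms by (simp add: generator_at_def has_vector_derivative_iff_tendsto_quotient)

lemma C0_contraction_semigroupD:
  assumes "C0_contraction_semigroup J T" "t \<ge> 0"
  shows "bounded_cop J (T t)" and "norm (T t v) \<le> norm v"
proof -
  show bc: "bounded_cop J (T t)" using assms by (simp add: C0_contraction_semigroup_def)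
  have "norm (T t v) \<le> onorm (T t) * norm v"
    using bc by (simp add: bounded_cop_def onorm)
  also have "\<dots> \<le> 1 * norm v"
    using assms by (intro mult_right_mono) (simp_all add: C0_contraction_semigroup_def)
  finally show "norm (T t v) \<le> norm v" by simp
qed

lemma strongly_exposes_rotation_close:
  assumes cs: "complex_structure J" and se: "strongly_exposes J f x" and x: "norm x \<le> 1"
    and e: "e > 0"
  obtains \<eta> where "\<eta> > 0"
    and "\<And>y. norm y \<le> 1 \<Longrightarrow> 1 - \<eta> \<le> cmod (f y) \<Longrightarrow> \<exists>c. cmod c = 1 \<and> norm (cscale J c y - x) < e"
proof -
  have df: "dual_functional J f" and fx: "f x = 1"
    and lim: "((\<lambda>\<alpha>. diameter (slice f \<alpha>)) \<longlongrightarrow> 0) (at_right 0)"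
    using se by (auto simp: strongly_exposes_def)
  have "\<forall>\<^sub>F \<alpha> in at_right 0. \<alpha> < (1::real)"
    by (auto simp: eventually_at_right_field intro: exI[of _ 1])
  then have "\<forall>\<^sub>F \<alpha> in at_right 0. diameter (slice f \<alpha>) < e \<and> 0 < \<alpha> \<and> \<alpha> < 1"
    using order_tendstoD(2)[OF lim e] eventually_at_right_less[of "0::real"]
    by eventually_elim auto
  then obtain \<eta> where \<eta>: "0 < \<eta>" "\<eta> < 1" and diam: "diameter (slice f \<eta>) < e"
    using eventually_happens'[OF trivial_limit_at_right_real] by blast
  have bounded: "bounded (slice f \<eta>)"
    by (rule bounded_subset[OF bounded_cball[of 0 1]]) (auto simp: slice_def)
  have x_slice: "x \<in> slice f \<eta>" using x fx \<eta> by (simp add: slice_def)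
  show thesis
  proof (rule that[OF \<eta>(1)])
    fix y assume y: "norm y \<le> 1" "1 - \<eta> \<le> cmod (f y)"
    then have fy: "f y \<noteq> 0" using \<eta> by auto
    define c where "c = cnj (f y) / cmod (f y)"
    have c: "cmod c = 1" using fy by (simp add: c_def norm_divide)
    have "f (cscale J c y) = (f y * cnj (f y)) / cmod (f y)"
      by (simp add: dual_functional_cscale[OF df] c_def)
    also have "\<dots> = cmod (f y)"
      using fy by (simp add: complex_norm_square[symmetric] power2_eq_square)
    finally have "f (cscale J c y) = cmod (f y)" .
    then have "cscale J c y \<in> slice f \<eta>"
      using y c by (simp add: slice_def norm_cscale[OF cs])
    then have "dist (cscale J c y) x < e"
      using diameter_bounded_bound[OF bounded _ x_slice] diam by fastforce
    then show "\<exists>c. cmod c = 1 \<and> norm (cscale J c y - x) < e"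
      using c by (auto simp: dist_norm)
  qed
qed

lemma contraction_rotation_close:
  assumes cs: "complex_structure J"
    and L: "bounded_cop J L" "\<And>v. norm (L v) \<le> norm v"
    and c: "cmod c1 = 1" "cmod c2 = 1"
    and y: "norm (cscale J c1 y - x) < e" and Ly: "norm (cscale J c2 (L y) - x) < e"
  shows "dist (cscale J (c1 / c2) x) (L x) < 2 * e"
proof -
  interpret linear L using L(1) by (simp add: bounded_cop_def bounded_linear.linear)
  have "norm (L (cscale J c1 y) - L x) < e"
    using L(2)[of "cscale J c1 y - x"] y by (simp add: diff[symmetric])
  moreover have "L (cscale J c1 y) - cscale J (c1 / c2) x = cscale J (c1 / c2) (cscale J c2 (L y) - x)"
    using c by (auto simp: bounded_cop_cscale[OF L(1)] cscale_diff[OF cs] cscale_cscale[OF cs])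
  then have "norm (L (cscale J c1 y) - cscale J (c1 / c2) x) < e"
    using c Ly by (simp add: norm_cscale[OF cs] norm_divide)
  ultimately show ?thesis
    using norm_triangle_lt[of "cscale J (c1 / c2) x - L (cscale J c1 y)" "L (cscale J c1 y) - L x"]
    by (simp add: dist_norm norm_minus_commute)
qed

lemma strongly_exposed_orbit_rotation:
  assumes cs: "complex_structure J" and se: "strongly_exposes J f x" and x: "norm x \<le> 1"
    and sg: "C0_contraction_semigroup J T"
    and lim: "((\<lambda>t. cmod (f (T t x))) \<longlongrightarrow> 1) at_top" and s: "s \<ge> 0"
  shows "T s x \<in> (\<lambda>c. cscale J c x) ` sphere 0 1"
proof -
  have "compact ((\<lambda>c. cscale J c x) ` sphere 0 1)"
    by (intro compact_continuous_image linear_continuous_on bounded_linear_cscale_left) simp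
  moreover have "T s x \<in> closure ((\<lambda>c. cscale J c x) ` sphere 0 1)"
    unfolding closure_approachable
  proof (intro allI impI)
    fix \<epsilon> :: real assume "\<epsilon> > 0"
    then obtain \<eta> where "\<eta> > 0" and close: "\<And>y. norm y \<le> 1 \<Longrightarrow> 1 - \<eta> \<le> cmod (f y) \<Longrightarrow>
        \<exists>c. cmod c = 1 \<and> norm (cscale J c y - x) < \<epsilon> / 2"
      using strongly_exposes_rotation_close[OF cs se x, of "\<epsilon> / 2"] by auto
    then obtain N where N: "\<And>t. t \<ge> N \<Longrightarrow> 1 - \<eta> \<le> cmod (f (T t x))"
      using order_tendstoD(1)[OF lim, of "1 - \<eta>"] by (force simp: eventually_at_top_linorder)
    define t where "t = max N 0"
    have t: "t \<ge> 0" "t \<ge> N" "s + t \<ge> N" using s by (auto simp: t_def)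
    have "norm (T t x) \<le> 1" "norm (T (s + t) x) \<le> 1"
      using C0_contraction_semigroupD(2)[OF sg] s t x by (meson add_nonneg_nonneg order_trans)+
    then obtain c1 c2 where c: "cmod c1 = 1" "cmod c2 = 1"
      and "norm (cscale J c1 (T t x) - x) < \<epsilon> / 2" "norm (cscale J c2 (T (s + t) x) - x) < \<epsilon> / 2"
      using close N t by meson
    moreover have "T (s + t) x = T s (T t x)"
      using sg s t by (simp add: C0_contraction_semigroup_def)
    ultimately have "dist (cscale J (c1 / c2) x) (T s x) < 2 * (\<epsilon> / 2)"
      by (intro contraction_rotation_close[OF cs C0_contraction_semigroupD[OF sg s]]) auto
    moreover have "cscale J (c1 / c2) x \<in> (\<lambda>c. cscale J c x) ` sphere 0 1"
      using c by (simp add: norm_divide)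
    ultimately show "\<exists>y\<in>(\<lambda>c. cscale J c x) ` sphere 0 1. dist y (T s x) < \<epsilon>"
      by auto
  qed
  ultimately show ?thesis
    by (simp add: compact_imp_closed closure_closed)
qed

locale unimodular_character =
  fixes \<phi> :: "real \<Rightarrow> complex"
  assumes norm_character: "s \<ge> 0 \<Longrightarrow> cmod (\<phi> s) = 1"
    and character_add: "s \<ge> 0 \<Longrightarrow> t \<ge> 0 \<Longrightarrow> \<phi> (s + t) = \<phi> s * \<phi> t"
    and tendsto_character_0: "(\<phi> \<longlongrightarrow> 1) (at_right 0)"
begin

lemma character_0: "\<phi> 0 = 1"
proof -
  have "\<phi> 0 * (\<phi> 0 - 1) = 0"
    using character_add[of 0 0] by (simp add: algebra_simps)
  then show ?thesis using norm_character[of 0] by auto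
qed

lemma norm_character_diff:
  assumes "0 \<le> t" "0 \<le> u"
  shows "cmod (\<phi> u - \<phi> t) = cmod (\<phi> \<bar>u - t\<bar> - 1)"
proof -
  have shift: "cmod (\<phi> b - \<phi> a) = cmod (\<phi> (b - a) - 1)" if "0 \<le> a" "a \<le> b" for a b
  proof -
    have "\<phi> b - \<phi> a = \<phi> a * (\<phi> (b - a) - 1)"
      using character_add[of a "b - a"] that by (simp add: algebra_simps)
    then show ?thesis using norm_character[of a] that by (simp add: norm_mult)
  qed
  show ?thesis
    using shift[of t u] shift[of u t] assms by (cases "t \<le> u") (auto simp: norm_minus_commute)
qed

lemma continuous_on_character: "continuous_on {0..} \<phi>"
  unfolding continuous_on_eq_continuous_within
proof
  fix t :: real assume t: "t \<in> {0..}"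
  have "filterlim (\<lambda>u. \<bar>u - t\<bar>) (at_right 0) (at t within {0..})"
    unfolding filterlim_at
    by (auto simp: eventually_at_filter intro!: tendsto_eq_intros)
  then have "((\<lambda>u. cmod (\<phi> \<bar>u - t\<bar> - 1)) \<longlongrightarrow> 0) (at t within {0..})"
    using filterlim_compose[OF tendsto_character_0] by (simp add: tendsto_norm_zero_iff LIM_zero_iff)
  moreover have "\<forall>\<^sub>F u in at t within {0..}. cmod (\<phi> \<bar>u - t\<bar> - 1) = cmod (\<phi> u - \<phi> t)"
    using t by (auto simp: eventually_at_filter norm_character_diff)
  ultimately have "((\<lambda>u. cmod (\<phi> u - \<phi> t)) \<longlongrightarrow> 0) (at t within {0..})"
    by (rule Lim_transform_eventually)
  then show "continuous (at t within {0..}) \<phi>"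
    by (simp add: continuous_within tendsto_norm_zero_iff LIM_zero_iff)
qed

lemma character_integral_shift:
  assumes "0 \<le> t" "0 \<le> d"
  shows "integral {0..t + d} \<phi> - integral {0..t} \<phi> = \<phi> t * integral {0..d} \<phi>"
proof -
  have "\<phi> integrable_on {0..t + d}"
    by (intro integrable_continuous_interval continuous_on_subset[OF continuous_on_character]) auto
  then have "integral {0..t + d} \<phi> - integral {0..t} \<phi> = integral {t..t + d} \<phi>"
    using Henstock_Kurzweil_Integration.integral_combine[where f = \<phi> and a = 0 and c = t and b = "t + d"] assms
    by (simp add: algebra_simps)
  also have "\<dots> = integral {0..d} (\<lambda>s. \<phi> (s + t))"
    using integral_shift_real_ivl[where f = \<phi> and a = t and b = "t + d" and c = t] by simp
  also have "\<dots> = integral {0..d} (\<lambda>s. \<phi> t * \<phi> s)"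
    using assms by (intro integral_cong) (simp add: character_add add.commute)
  finally show ?thesis by simp
qed

lemma has_vector_derivative_integral_character:
  assumes "p \<in> {0..b}"
  shows "((\<lambda>u. integral {0..u} \<phi>) has_vector_derivative \<phi> p) (at p within {0..b})"
  using assms
  by (intro integral_has_vector_derivative continuous_on_subset[OF continuous_on_character]) auto

lemma integral_character_nonzero:
  obtains d where "0 < d" "d < 1" "integral {0..d} \<phi> \<noteq> 0"
proof -
  have "((\<lambda>u. integral {0..u} \<phi>) has_vector_derivative 1) (at_right 0)"
    using has_vector_derivative_integral_character[of 0 1] by (simp add: at_within_Icc_at_right character_0)
  then have "((\<lambda>y. (1 / y) *\<^sub>R integral {0..y} \<phi>) \<longlongrightarrow> 1) (at_right 0)"
    by (simp add: has_vector_derivative_iff_tendsto_quotient)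
  from tendsto_imp_eventually_ne[OF this, of 0]
  have "\<forall>\<^sub>F y in at_right 0. integral {0..y} \<phi> \<noteq> 0" by (auto elim: eventually_mono)
  moreover have "\<forall>\<^sub>F y in at_right 0. y < (1::real)"
    by (auto simp: eventually_at_right_field intro: exI[of _ 1])
  ultimately have "\<forall>\<^sub>F y in at_right 0. 0 < y \<and> y < 1 \<and> integral {0..y} \<phi> \<noteq> 0"
    using eventually_at_right_less[of "0::real"] by eventually_elim auto
  then show thesis
    using that eventually_happens'[OF trivial_limit_at_right_real] by blast
qed

lemma has_right_derivative_character:
  obtains z where "(\<phi> has_vector_derivative z) (at_right 0)"
proof -
  define G where "G u = integral {0..u} \<phi>" for u
  obtain d where d: "0 < d" "d < 1" "G d \<noteq> 0"
    using integral_character_nonzero unfolding G_def by blast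
  have "(G has_vector_derivative \<phi> d) (at d)"
    using has_vector_derivative_integral_character[of d 2] d by (simp add: G_def[abs_def] at_within_Icc_at)
  moreover have "((\<lambda>t. t + d) has_vector_derivative 1) (at 0)"
    by (auto intro!: derivative_eq_intros)
  ultimately have "((\<lambda>t. G (t + d)) has_vector_derivative \<phi> d) (at_right 0)"
    using vector_diff_chain_at[of "\<lambda>t. t + d" 1 0 G] by (simp add: o_def has_vector_derivative_at_within)
  moreover have "(G has_vector_derivative 1) (at_right 0)"
    using has_vector_derivative_integral_character[of 0 1]
    by (simp add: G_def[abs_def] at_within_Icc_at_right character_0)
  ultimately have quotient_deriv:
    "((\<lambda>t. (G (t + d) - G t) / G d) has_vector_derivative (\<phi> d - 1) / G d) (at_right 0)"
    by (intro has_vector_derivative_divide has_vector_derivative_diff)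
  have shift: "(G (t + d) - G t) / G d = \<phi> t" if "t \<ge> 0" for t
    using character_integral_shift[of t d] that d by (simp add: G_def)
  then have "\<forall>\<^sub>F t in nhds 0. t \<in> {0<..} \<longrightarrow> (G (t + d) - G t) / G d = \<phi> t"
    by (auto intro: always_eventually)
  from has_vector_derivative_cong_ev[OF this shift[OF order_refl]] quotient_deriv show thesis
    using that by blast
qed

lemma right_derivative_character_imaginary:
  assumes "(\<phi> has_vector_derivative z) (at_right 0)"
  shows "Re z = 0"
proof -
  have deriv: "((\<lambda>t. \<phi> t * cnj (\<phi> t)) has_vector_derivative \<phi> 0 * cnj z + z * cnj (\<phi> 0)) (at_right 0)"
    using assms by (intro derivative_intros)
  have "\<phi> t * cnj (\<phi> t) = 1" if "t \<ge> 0" for t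
    using norm_character[OF that] by (simp flip: complex_norm_square)
  then have "((\<lambda>t. \<phi> t * cnj (\<phi> t)) has_vector_derivative 0) (at_right 0)"
    by (subst has_vector_derivative_cong_ev[where g = "\<lambda>_. 1"]) (auto intro: always_eventually)
  from vector_derivative_unique_within[OF _ deriv this] have "z + cnj z = 0"
    by (simp add: character_0 add.commute)
  then show ?thesis by (simp add: complex_eq_iff)
qed

end

lemma strongly_exposed_orbit_eigenvector:
  assumes cs: "complex_structure J" and se: "strongly_exposes J f x" and x: "norm x \<le> 1"
    and sg: "C0_contraction_semigroup J T"
    and lim: "((\<lambda>t. cmod (f (T t x))) \<longlongrightarrow> 1) at_top" and s: "s \<ge> 0"
  shows "T s x = cscale J (f (T s x)) x" and "cmod (f (T s x)) = 1"
proof -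
  obtain c where "cmod c = 1" "T s x = cscale J c x"
    using strongly_exposed_orbit_rotation[OF assms] by auto
  moreover have "f (cscale J c x) = c"
    using se by (simp add: strongly_exposes_def dual_functional_cscale)
  ultimately show "T s x = cscale J (f (T s x)) x" "cmod (f (T s x)) = 1" by simp_all
qed

lemma eigenvector_orbit_unimodular_character:
  assumes sg: "C0_contraction_semigroup J T" and df: "dual_functional J f" and fx: "f x = 1"
    and eigen: "\<And>s. s \<ge> 0 \<Longrightarrow> T s x = cscale J (f (T s x)) x \<and> cmod (f (T s x)) = 1"
  shows "unimodular_character (\<lambda>s. f (T s x))"
proof
  fix s t :: real assume st: "s \<ge> 0" "t \<ge> 0"
  have "T (s + t) x = T s (T t x)"
    using sg st by (simp add: C0_contraction_semigroup_def)
  also have "\<dots> = T s (cscale J (f (T t x)) x)"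
    using eigen[OF st(2)] by (metis (no_types))
  also have "\<dots> = cscale J (f (T t x)) (T s x)"
    by (rule bounded_cop_cscale[OF C0_contraction_semigroupD(1)[OF sg st(1)]])
  finally show "f (T (s + t) x) = f (T s x) * f (T t x)"
    by (simp add: dual_functional_cscale[OF df] mult.commute)
next
  have "((\<lambda>t. T t x) \<longlongrightarrow> x) (at_right 0)"
    using sg by (simp add: C0_contraction_semigroup_def)
  from bounded_linear.tendsto[OF _ this, of f] show "((\<lambda>s. f (T s x)) \<longlongrightarrow> 1) (at_right 0)"
    using df fx by (simp add: dual_functional_def)
qed (use eigen in blast)

lemma generator_at_eigenvector:
  assumes "T 0 x = x" and eigen: "\<And>t. t \<ge> 0 \<Longrightarrow> T t x = cscale J (\<phi> t) x"
    and deriv: "(\<phi> has_vector_derivative z) (at_right 0)"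
  shows "generator_at T x (cscale J z x)"
proof -
  have "\<forall>\<^sub>F t in nhds 0. t \<in> {0<..} \<longrightarrow> cscale J (\<phi> t) x = T t x"
    using eigen by (auto intro: always_eventually)
  from has_vector_derivative_cong_ev[OF this eigen[OF order_refl, symmetric]]
  have "((\<lambda>t. T t x) has_vector_derivative cscale J z x) (at_right 0)"
    using bounded_linear.has_vector_derivative[OF bounded_linear_cscale_left[of J x] deriv] by simp
  then show ?thesis
    using assms(1) by (simp add: generator_at_iff_has_vector_derivative)
qed

theorem theorem4:
  fixes J :: "'a::banach \<Rightarrow> 'a" and T :: "real \<Rightarrow> 'a \<Rightarrow> 'a"
    and x :: 'a and f :: "'a \<Rightarrow> complex"
  assumes "complex_structure J"
    and "norm x = 1"
    and "strongly_exposes J f x"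
    and "C0_contraction_semigroup J T"
    and "((\<lambda>t. cmod (f (T t x))) \<longlongrightarrow> 1) at_top"
  shows "\<exists>l::real. generator_at T x (cscale J (\<i> * complex_of_real l) x)"
proof -
  have eigen: "T s x = cscale J (f (T s x)) x \<and> cmod (f (T s x)) = 1" if "s \<ge> 0" for s
    using strongly_exposed_orbit_eigenvector[OF assms(1,3) _ assms(4,5) that] assms(2) by simp
  have "dual_functional J f" "f x = 1"
    using assms(3) by (auto simp: strongly_exposes_def)
  then interpret unimodular_character "\<lambda>s. f (T s x)"
    using eigenvector_orbit_unimodular_character[OF assms(4)] eigen by blast
  obtain z where z: "((\<lambda>s. f (T s x)) has_vector_derivative z) (at_right 0)"
    by (rule has_right_derivative_character)
  have "T 0 x = x"
    using assms(4) by (simp add: C0_contraction_semigroup_def)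
  with z eigen have "generator_at T x (cscale J z x)"
    by (intro generator_at_eigenvector) auto
  moreover have "z = \<i> * complex_of_real (Im z)"
    using right_derivative_character_imaginary[OF z] by (simp add: complex_eq_iff)
  ultimately show ?thesis by metis
qed

end
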